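(* Let $L$ be a normal incline, $n\ge 3$, and let $A$ be an $n\times n$ completely positive matrix over $L$ such that every left almost principal $2\times 2$ submatrix of $A$ has positive determinant greater than or equal to its negative determinant. Then $A$ is UL-completely positive.
   Context: An incline is a nonempty set $L$ with binary operations $\oplus,\otimes$ such that $(L,\oplus)$ is a semilattice ($\oplus$ associative, commutative, idempotent), $(L,\otimes)$ is a semigroup, $x\otimes(y\oplus z)=(x\otimes y)\oplus(x\otimes z)$ and $x\oplus(x\otimes y)=x$ for all $x,y,z$. The order is $x\le y\iff x\oplus y=y$; $L$ is commutative if $\otimes$ is commutative. An r-ideal is a nonempty $J\subseteq L$ closed under $\oplus$ and under multiplication by arbitrary elements of $L$; a lattice ideal is a nonempty $J\subseteq L$ closed under $\oplus$ and downward closed. A commutative incline $L$ is normal if it has an additive identity $\mathbf{0}$ and a multiplicative identity $\mathbf{1}$ and: every singly generated r-ideal is a lattice ideal (LI-property); for each $x$ there is a unique $c$ with $c\otimes c=x$; $x\otimes y\le(x\otimes x)\oplus(y\otimes y)$ for all $x,y$. Matrix product: $(BC)_{ij}=\bigoplus_k b_{ik}\otimes c_{kj}$; $B^T$ is the transpose. $A$ is completely positive if $A=BB^T$ for some $n\times k$ matrix $B$ over $L$ all of whose entries are of the form $c\otimes c$. $A$ is UL-completely positive if $A=UU^T$ for some upper triangular $n\times n$ matrix $U$ over $L$. For index sets $\alpha=\{\alpha_1<\dots<\alpha_k\}$, $\beta=\{\beta_1<\dots<\beta_k\}$, $A[\alpha|\beta]$ is the submatrix with $(i,j)$ entry $a_{\alpha_i\beta_j}$;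 it is left almost principal if $\alpha_j=\beta_j$ for $2\le j\le k$ but $\alpha_1\ne\beta_1$. For a $2\times 2$ matrix $\begin{bmatrix}p&q\\ r&s\end{bmatrix}$, the positive determinant is $p\otimes s$ and the negative determinant is $q\otimes r$. *)

theory Defs
  imports Main
begin

definition incline :: "('a \<Rightarrow> 'a \<Rightarrow> 'a) \<Rightarrow> ('a \<Rightarrow> 'a \<Rightarrow> 'a) \<Rightarrow> bool" where
  "incline p m \<longleftrightarrow>
     (\<forall>x y z. p (p x y) z = p x (p y z)) \<and> (\<forall>x y. p x y = p y x) \<and> (\<forall>x. p x x = x) \<and>
     (\<forall>x y z. m (m x y) z = m x (m y z)) \<and>
     (\<forall>x y z. m x (p y z) = p (m x y) (m x z)) \<and>
     (\<forall>x y. p x (m x y) = x)"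

definition ileq :: "('a \<Rightarrow> 'a \<Rightarrow> 'a) \<Rightarrow> 'a \<Rightarrow> 'a \<Rightarrow> bool" where
  "ileq p x y \<longleftrightarrow> p x y = y"

definition r_ideal :: "('a \<Rightarrow> 'a \<Rightarrow> 'a) \<Rightarrow> ('a \<Rightarrow> 'a \<Rightarrow> 'a) \<Rightarrow> 'a set \<Rightarrow> bool" where
  "r_ideal p m J \<longleftrightarrow> J \<noteq> {} \<and> (\<forall>x\<in>J. \<forall>y\<in>J. p x y \<in> J) \<and>
     (\<forall>x\<in>J. \<forall>y. m x y \<in> J \<and> m y x \<in> J)"

definition lattice_ideal :: "('a \<Rightarrow> 'a \<Rightarrow> 'a) \<Rightarrow> 'a set \<Rightarrow> bool" where
  "lattice_ideal p J \<longleftrightarrow> J \<noteq> {} \<and> (\<forall>x\<in>J. \<forall>y\<in>J. p x y \<in> J) \<and>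
     (\<forall>x\<in>J. \<forall>y. ileq p y x \<longrightarrow> y \<in> J)"

definition gen_r_ideal :: "('a \<Rightarrow> 'a \<Rightarrow> 'a) \<Rightarrow> ('a \<Rightarrow> 'a \<Rightarrow> 'a) \<Rightarrow> 'a \<Rightarrow> 'a set" where
  "gen_r_ideal p m x = \<Inter>{J. r_ideal p m J \<and> x \<in> J}"

definition normal_incline ::
  "('a \<Rightarrow> 'a \<Rightarrow> 'a) \<Rightarrow> ('a \<Rightarrow> 'a \<Rightarrow> 'a) \<Rightarrow> 'a \<Rightarrow> 'a \<Rightarrow> bool" where
  "normal_incline p m z e \<longleftrightarrow>
     incline p m \<and> (\<forall>x y. m x y = m y x) \<and>
     (\<forall>x. p z x = x) \<and> (\<forall>x. m e x = x \<and> m x e = x) \<and>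
     (\<forall>x. lattice_ideal p (gen_r_ideal p m x)) \<and>
     (\<forall>x. \<exists>!c. m c c = x) \<and>
     (\<forall>x y. ileq p (m x y) (p (m x x) (m y y)))"

definition isum :: "('a \<Rightarrow> 'a \<Rightarrow> 'a) \<Rightarrow> 'a \<Rightarrow> nat \<Rightarrow> (nat \<Rightarrow> 'a) \<Rightarrow> 'a" where
  "isum p z k f = foldr (\<lambda>i acc. p (f i) acc) [0..<k] z"

text \<open>Matrices are functions nat => nat => 'a, indices 0-based and only meaningful below the size.\<close>

definition completely_positive ::
  "('a \<Rightarrow> 'a \<Rightarrow> 'a) \<Rightarrow> ('a \<Rightarrow> 'a \<Rightarrow> 'a) \<Rightarrow> 'a \<Rightarrow> nat \<Rightarrow> (nat \<Rightarrow> nat \<Rightarrow> 'a) \<Rightarrow> bool" where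
  "completely_positive p m z n A \<longleftrightarrow>
     (\<exists>k (B :: nat \<Rightarrow> nat \<Rightarrow> 'a). k \<ge> 1 \<and>
        (\<forall>i<n. \<forall>l<k. \<exists>c. B i l = m c c) \<and>
        (\<forall>i<n. \<forall>j<n. A i j = isum p z k (\<lambda>l. m (B i l) (B j l))))"

definition UL_completely_positive ::
  "('a \<Rightarrow> 'a \<Rightarrow> 'a) \<Rightarrow> ('a \<Rightarrow> 'a \<Rightarrow> 'a) \<Rightarrow> 'a \<Rightarrow> nat \<Rightarrow> (nat \<Rightarrow> nat \<Rightarrow> 'a) \<Rightarrow> bool" where
  "UL_completely_positive p m z n A \<longleftrightarrow>
     (\<exists>U :: nat \<Rightarrow> nat \<Rightarrow> 'a.
        (\<forall>i<n. \<forall>j<n. j < i \<longrightarrow> U i j = z) \<and>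
        (\<forall>i<n. \<forall>j<n. A i j = isum p z n (\<lambda>l. m (U i l) (U j l))))"

text \<open>Every left almost principal 2x2 submatrix A[{a1<c}|{b1<c}], a1 \<noteq> b1, has
  positive determinant A(a1,b1) A(c,c) >= negative determinant A(a1,c) A(c,b1).\<close>
definition lap2_condition ::
  "('a \<Rightarrow> 'a \<Rightarrow> 'a) \<Rightarrow> ('a \<Rightarrow> 'a \<Rightarrow> 'a) \<Rightarrow> nat \<Rightarrow> (nat \<Rightarrow> nat \<Rightarrow> 'a) \<Rightarrow> bool" where
  "lap2_condition p m n A \<longleftrightarrow>
     (\<forall>a1 b1 c. a1 < c \<and> b1 < c \<and> c < n \<and> a1 \<noteq> b1 \<longrightarrow>
        ileq p (m (A a1 c) (A c b1)) (m (A a1 b1) (A c c)))"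

end

theory Submission
  imports Defs
begin

text \<open>
  Put \<open>d\<^sub>l = \<surd>A\<^sub>l\<^sub>l\<close>. A Cauchy--Schwarz bound gives \<open>A\<^sub>i\<^sub>l \<le> d\<^sub>l\<close>, so by the
  LI-property \<open>A\<^sub>i\<^sub>l = s\<^sub>i\<^sub>l d\<^sub>l\<close> for some \<open>s\<^sub>i\<^sub>l\<close>. Column \<open>l\<close> of \<open>U\<close> is taken to be
  \<open>s\<^sub>i\<^sub>l G\<^sub>l\<close> above the diagonal, \<open>d\<^sub>l\<close> on it and \<open>0\<close> below, where \<open>G\<^sub>l d\<^sub>l = d\<^sub>l\<close>.
  Then \<open>(UU\<^sup>T)\<^sub>i\<^sub>j\<close> for \<open>i \<le> j\<close> is \<open>A\<^sub>i\<^sub>j\<close> joined with the terms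
  \<open>s\<^sub>i\<^sub>l s\<^sub>j\<^sub>l G\<^sub>l\<^sup>2\<close>, \<open>l > j\<close>, which must lie below \<open>A\<^sub>i\<^sub>j\<close>. The almost principal minor
  condition says \<open>s\<^sub>i\<^sub>l s\<^sub>j\<^sub>l d\<^sub>l\<^sup>2 \<le> A\<^sub>i\<^sub>j d\<^sub>l\<^sup>2\<close>, and the heart of the proof is a
  cancellation law of normal inclines: \<open>x d\<^sup>2 \<le> y d\<^sup>2\<close> implies \<open>x G\<^sup>2 \<le> y\<close> for some
  \<open>G\<close> with \<open>G d = d\<close>, and one such \<open>G\<close> serves finitely many inequalities at once.
\<close>

locale normal_incline_ops =
  fixes p :: "'a \<Rightarrow> 'a \<Rightarrow> 'a" (infixl "\<oplus>" 65)
    and m :: "'a \<Rightarrow> 'a \<Rightarrow> 'a" (infixl "\<otimes>" 70)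
    and z e :: 'a
  assumes normal: "normal_incline p m z e"
begin

abbreviation le :: "'a \<Rightarrow> 'a \<Rightarrow> bool" (infix "\<preceq>" 50)
  where "x \<preceq> y \<equiv> ileq p x y"

lemma incline: "incline p m"
  using normal unfolding normal_incline_def by blast

sublocale add: semilattice p
  using incline unfolding incline_def by unfold_locales blast+

sublocale mult: abel_semigroup m
  using normal unfolding normal_incline_def incline_def by unfold_locales blast+

lemmas mult_ac = mult.assoc mult.commute mult.left_commute

lemma distrib_left: "x \<otimes> (y \<oplus> w) = x \<otimes> y \<oplus> x \<otimes> w"
  using incline unfolding incline_def by blast

lemma distrib_right: "(y \<oplus> w) \<otimes> x = y \<otimes> x \<oplus> w \<otimes> x"
  using distrib_left mult.commute by metis

lemma add_mult_absorb: "x \<oplus> x \<otimes> y = x"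
  using incline unfolding incline_def by blast

lemma zero_add: "z \<oplus> x = x"
  using normal unfolding normal_incline_def by blast

lemma one_mult: "e \<otimes> x = x"
  using normal unfolding normal_incline_def by blast

lemma ex1_square_root: "\<exists>!c. c \<otimes> c = x"
  using normal unfolding normal_incline_def by blast

lemma mult_le_add_squares: "x \<otimes> y \<preceq> x \<otimes> x \<oplus> y \<otimes> y"
  using normal unfolding normal_incline_def by blast

subsection \<open>The order\<close>

lemma le_refl: "x \<preceq> x"
  by (simp add: ileq_def)

lemma le_trans [trans]: "x \<preceq> y \<Longrightarrow> y \<preceq> w \<Longrightarrow> x \<preceq> w"
  unfolding ileq_def by (metis add.assoc)

lemma le_antisym: "x \<preceq> y \<Longrightarrow> y \<preceq> x \<Longrightarrow> x = y"
  unfolding ileq_def by (metis add.commute)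

lemma le_add1: "x \<preceq> x \<oplus> y"
  unfolding ileq_def by (metis add.assoc add.idem)

lemma le_add2: "y \<preceq> x \<oplus> y"
  using le_add1 add.commute by metis

lemma add_le: "x \<preceq> w \<Longrightarrow> y \<preceq> w \<Longrightarrow> x \<oplus> y \<preceq> w"
  unfolding ileq_def by (metis add.assoc)

lemma zero_le: "z \<preceq> x"
  by (simp add: ileq_def zero_add)

lemma mult_left_mono: "x \<preceq> y \<Longrightarrow> w \<otimes> x \<preceq> w \<otimes> y"
  unfolding ileq_def by (metis distrib_left)

lemma mult_right_mono: "x \<preceq> y \<Longrightarrow> x \<otimes> w \<preceq> y \<otimes> w"
  using mult_left_mono mult.commute by metis

lemma mult_mono: "a \<preceq> a' \<Longrightarrow> b \<preceq> b' \<Longrightarrow> a \<otimes> b \<preceq> a' \<otimes> b'"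
  using mult_left_mono mult_right_mono le_trans by metis

lemma mult_le_left: "x \<otimes> y \<preceq> x"
  unfolding ileq_def by (metis add_mult_absorb add.commute)

lemma mult_le_right: "x \<otimes> y \<preceq> y"
  using mult_le_left mult.commute by metis

lemma mult_zero: "x \<otimes> z = z"
  using mult_le_right zero_le le_antisym by metis

lemma le_imp_factor:
  assumes "y \<preceq> x"
  shows "\<exists>t. y = x \<otimes> t"
proof -
  let ?I = "{w. \<exists>t. w = x \<otimes> t}"
  have "r_ideal p m ?I"
    unfolding r_ideal_def
  proof (intro conjI ballI allI)
    fix a b assume "a \<in> ?I" "b \<in> ?I"
    then show "a \<oplus> b \<in> ?I"
      by (auto simp flip: distrib_left)
  next
    fix a y assume "a \<in> ?I"
    then obtain t where "a = x \<otimes> t" by blast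
    then have "a \<otimes> y = x \<otimes> (t \<otimes> y)" "y \<otimes> a = x \<otimes> (t \<otimes> y)"
      by (simp_all only: mult.assoc mult.left_commute[of y] mult.commute[of y t])
    then show "a \<otimes> y \<in> ?I" "y \<otimes> a \<in> ?I" by blast+
  qed blast
  moreover have "x \<in> ?I"
  proof -
    have "x = x \<otimes> e"
      using one_mult[of x] by (simp only: mult.commute[of e])
    then show ?thesis by blast
  qed
  ultimately have "gen_r_ideal p m x \<subseteq> ?I"
    unfolding gen_r_ideal_def by (intro Inter_lower) simp
  moreover have "y \<in> gen_r_ideal p m x"
  proof -
    have "x \<in> gen_r_ideal p m x"
      unfolding gen_r_ideal_def by blast
    then show ?thesis
      using assms normal unfolding normal_incline_def lattice_ideal_def by blast
  qed
  ultimately show ?thesis by blast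
qed

subsection \<open>Square roots\<close>

definition sq_root :: "'a \<Rightarrow> 'a"
  where "sq_root x = (THE c. c \<otimes> c = x)"

lemma sq_root_square: "sq_root x \<otimes> sq_root x = x"
  unfolding sq_root_def by (rule theI'[OF ex1_square_root])

lemma square_inj: "a \<otimes> a = b \<otimes> b \<Longrightarrow> a = b"
  using ex1_square_root[of "b \<otimes> b"] by blast

lemma sq_root_of_square: "sq_root (c \<otimes> c) = c"
  using square_inj sq_root_square by metis

text \<open>The cross term is absorbed by \<open>mult_le_add_squares\<close>.\<close>
lemma square_add: "(x \<oplus> y) \<otimes> (x \<oplus> y) = x \<otimes> x \<oplus> y \<otimes> y"
proof -
  have "(x \<oplus> y) \<otimes> (x \<oplus> y) = x \<otimes> x \<oplus> x \<otimes> y \<oplus> (x \<otimes> y \<oplus> y \<otimes> y)"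
    by (simp only: distrib_left distrib_right mult.commute[of y x])
  also have "\<dots> = x \<otimes> y \<oplus> (x \<otimes> x \<oplus> y \<otimes> y)"
    by (metis add.assoc add.commute add.idem)
  also have "\<dots> = x \<otimes> x \<oplus> y \<otimes> y"
    using mult_le_add_squares unfolding ileq_def .
  finally show ?thesis .
qed

lemma square_mono: "a \<preceq> b \<Longrightarrow> a \<otimes> a \<preceq> b \<otimes> b"
  by (rule mult_mono)

lemma square_le_imp_le: "a \<otimes> a \<preceq> b \<otimes> b \<Longrightarrow> a \<preceq> b"
  unfolding ileq_def using square_add square_inj by metis

lemma sq_root_mono: "x \<preceq> y \<Longrightarrow> sq_root x \<preceq> sq_root y"
  using square_le_imp_le sq_root_square by metis

lemma sq_root_mult: "sq_root (x \<otimes> y) = sq_root x \<otimes> sq_root y"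
proof -
  have "(sq_root x \<otimes> sq_root y) \<otimes> (sq_root x \<otimes> sq_root y)
      = (sq_root x \<otimes> sq_root x) \<otimes> (sq_root y \<otimes> sq_root y)"
    by (simp add: mult_ac)
  then show ?thesis
    using sq_root_square sq_root_of_square by metis
qed

subsection \<open>Cancellation\<close>

lemma square_eq_mult_imp_eq:
  assumes "b \<preceq> a" and "a \<otimes> a = a \<otimes> b"
  shows "a = b"
proof -
  obtain c where b: "b = a \<otimes> c"
    using le_imp_factor assms(1) by blast
  have "a \<otimes> a = (a \<otimes> a) \<otimes> c"
    using assms(2) b by (metis mult.assoc)
  then have "sq_root (a \<otimes> a) = sq_root ((a \<otimes> a) \<otimes> c)"
    by simp
  then have a: "a = a \<otimes> sq_root c"
    by (simp only: sq_root_mult[of "a \<otimes> a"] sq_root_of_square)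
  have "b = (a \<otimes> sq_root c) \<otimes> sq_root c"
    using b sq_root_square[of c] by (simp add: mult.assoc)
  then show ?thesis
    using a by simp
qed

lemma le_sq_root_mult_imp_le:
  assumes "u \<preceq> sq_root Y \<otimes> sq_root u"
  shows "u \<preceq> Y"
proof -
  define W where "W = u \<oplus> Y"
  have u: "sq_root u \<preceq> sq_root W" and Y: "sq_root Y \<preceq> sq_root W"
    unfolding W_def by (simp_all add: sq_root_mono le_add1 le_add2)
  have "u \<preceq> sq_root Y \<otimes> sq_root W"
    using assms mult_left_mono[OF u] le_trans by blast
  moreover have "Y \<preceq> sq_root Y \<otimes> sq_root W"
    using mult_left_mono[OF Y, of "sq_root Y"] sq_root_square by metis
  ultimately have "W \<preceq> sq_root Y \<otimes> sq_root W"
    unfolding W_def by (rule add_le)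
  moreover have "sq_root Y \<otimes> sq_root W \<preceq> W"
    using mult_right_mono[OF Y, of "sq_root W"] sq_root_square by metis
  ultimately have "W = sq_root Y \<otimes> sq_root W"
    by (rule le_antisym)
  then have "sq_root W \<otimes> sq_root W = sq_root W \<otimes> sq_root Y"
    using sq_root_square mult.commute by metis
  then have "sq_root W = sq_root Y"
    using square_eq_mult_imp_eq Y by blast
  then have "W = Y"
    using sq_root_square by metis
  then show ?thesis
    unfolding W_def using le_add1 by metis
qed

lemma mult_le_cancel_right:
  assumes "u \<preceq> D" and "u \<otimes> D \<preceq> Y \<otimes> D"
  shows "u \<preceq> Y"
proof -
  obtain s where u: "u = D \<otimes> s"
    using le_imp_factor assms(1) by blast
  have "u \<otimes> D = (D \<otimes> D) \<otimes> s"
    using u by (simp add: mult_ac)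
  then have "sq_root (u \<otimes> D) = D \<otimes> sq_root s"
    by (simp only: sq_root_mult[of "D \<otimes> D"] sq_root_of_square)
  with assms(2) have "D \<otimes> sq_root s \<preceq> sq_root Y \<otimes> sq_root D"
    using sq_root_mono by (metis sq_root_mult)
  then have "(D \<otimes> sq_root s) \<otimes> sq_root s \<preceq> (sq_root Y \<otimes> sq_root D) \<otimes> sq_root s"
    by (rule mult_right_mono)
  moreover have "(D \<otimes> sq_root s) \<otimes> sq_root s = u"
    using u sq_root_square[of s] by (simp add: mult.assoc)
  moreover have "(sq_root Y \<otimes> sq_root D) \<otimes> sq_root s = sq_root Y \<otimes> sq_root u"
    using u by (simp add: sq_root_mult mult.assoc)
  ultimately show ?thesis
    using le_sq_root_mult_imp_le by simp
qed

lemma mult_le_cancel_stabilizer: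
  assumes "x \<otimes> D \<preceq> Y \<otimes> D"
  shows "\<exists>F. F \<otimes> D = D \<and> x \<otimes> F \<preceq> Y"
proof -
  define W where "W = x \<oplus> Y"
  have WD: "W \<otimes> D = Y \<otimes> D"
    using assms unfolding W_def ileq_def by (simp add: distrib_right)
  obtain r where r: "Y = W \<otimes> r"
    using le_imp_factor le_add2[of Y x] unfolding W_def by blast
  obtain \<rho> where "D = (W \<oplus> D) \<otimes> \<rho>"
    using le_imp_factor le_add2[of D W] by blast
  then have D: "D = W \<otimes> \<rho> \<oplus> D \<otimes> \<rho>"
    by (simp add: distrib_right)
  then have W\<rho>_le_D: "W \<otimes> \<rho> \<preceq> D"
    using le_add1 by metis
  have W\<rho>D: "(W \<otimes> \<rho>) \<otimes> D = (Y \<otimes> D) \<otimes> \<rho>"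
    by (simp only: WD[symmetric] mult.assoc mult.commute[of \<rho> D])
  have W\<rho>_le_Y: "W \<otimes> \<rho> \<preceq> Y"
    using W\<rho>_le_D by (rule mult_le_cancel_right) (simp add: W\<rho>D mult_le_left)
  define F where "F = r \<oplus> \<rho>"
  have W\<rho>_le_F: "W \<otimes> \<rho> \<preceq> r \<otimes> D \<oplus> \<rho> \<otimes> D"
  proof (rule mult_le_cancel_right[OF W\<rho>_le_D])
    have "(W \<otimes> \<rho>) \<otimes> D = ((W \<otimes> r) \<otimes> D) \<otimes> \<rho>"
      using W\<rho>D r by simp
    also have "\<dots> = r \<otimes> ((W \<otimes> \<rho>) \<otimes> D)"
      by (simp only: mult_ac)
    also have "\<dots> \<preceq> r \<otimes> (D \<otimes> D)"
      by (intro mult_left_mono mult_right_mono W\<rho>_le_D)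
    also have "\<dots> = (r \<otimes> D) \<otimes> D"
      by (simp only: mult.assoc)
    also have "\<dots> \<preceq> (r \<otimes> D \<oplus> \<rho> \<otimes> D) \<otimes> D"
      by (rule mult_right_mono[OF le_add1])
    finally show "(W \<otimes> \<rho>) \<otimes> D \<preceq> (r \<otimes> D \<oplus> \<rho> \<otimes> D) \<otimes> D" .
  qed
  have FD: "F \<otimes> D = r \<otimes> D \<oplus> \<rho> \<otimes> D"
    unfolding F_def by (rule distrib_right)
  have "D \<preceq> F \<otimes> D"
  proof -
    have "D \<otimes> \<rho> \<preceq> F \<otimes> D"
      unfolding FD using le_add2 mult.commute by metis
    then show ?thesis
      using D W\<rho>_le_F FD add_le by metis
  qed
  then have "F \<otimes> D = D"
    using mult_le_right le_antisym by blast
  moreover have "W \<otimes> F = Y"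
  proof -
    have "W \<otimes> F = Y \<oplus> W \<otimes> \<rho>"
      unfolding F_def using r by (simp add: distrib_left)
    then show ?thesis
      using W\<rho>_le_Y add.commute unfolding ileq_def by metis
  qed
  moreover have "x \<otimes> F \<preceq> W \<otimes> F"
    unfolding W_def by (rule mult_right_mono[OF le_add1])
  ultimately show ?thesis by auto
qed

lemma mult_square_le_cancel_stabilizer:
  assumes "x \<otimes> (d \<otimes> d) \<preceq> Y \<otimes> (d \<otimes> d)"
  shows "\<exists>G. G \<otimes> d = d \<and> x \<otimes> (G \<otimes> G) \<preceq> Y"
proof -
  obtain F where F: "F \<otimes> (d \<otimes> d) = d \<otimes> d" "x \<otimes> F \<preceq> Y"
    using mult_le_cancel_stabilizer assms by blast
  have "(sq_root F \<otimes> d) \<otimes> (sq_root F \<otimes> d) = F \<otimes> (d \<otimes> d)"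
    using sq_root_square[of F] by (simp add: mult_ac)
  then have "sq_root F \<otimes> d = d"
    unfolding F(1) by (rule square_inj)
  then show ?thesis
    using F(2) by (intro exI[of _ "sq_root F"]) (simp add: sq_root_square)
qed

text \<open>The product of stabilizers of \<open>d\<close> is again one, and it is smaller than each factor.\<close>
lemma common_square_stabilizer:
  assumes "finite S" and "\<forall>q\<in>S. X q \<otimes> (d \<otimes> d) \<preceq> Y q \<otimes> (d \<otimes> d)"
  shows "\<exists>G. G \<otimes> d = d \<and> (\<forall>q\<in>S. X q \<otimes> (G \<otimes> G) \<preceq> Y q)"
  using assms
proof (induction S rule: finite_induct)
  case empty
  then show ?case
    by (intro exI[of _ e]) (simp add: one_mult)
next
  case (insert q S)
  obtain G\<^sub>1 where G\<^sub>1: "G\<^sub>1 \<otimes> d = d" "\<forall>q\<in>S. X q \<otimes> (G\<^sub>1 \<otimes> G\<^sub>1) \<preceq> Y q"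
    using insert by auto
  obtain G\<^sub>2 where G\<^sub>2: "G\<^sub>2 \<otimes> d = d" "X q \<otimes> (G\<^sub>2 \<otimes> G\<^sub>2) \<preceq> Y q"
    using mult_square_le_cancel_stabilizer insert.prems by blast
  let ?G = "G\<^sub>1 \<otimes> G\<^sub>2"
  have "?G \<otimes> d = d"
    using G\<^sub>1(1) G\<^sub>2(1) by (simp add: mult.assoc)
  moreover have "X q' \<otimes> (?G \<otimes> ?G) \<preceq> Y q'" if "q' \<in> insert q S" for q'
  proof -
    have "X q' \<otimes> (?G \<otimes> ?G) \<preceq> X q' \<otimes> (G\<^sub>1 \<otimes> G\<^sub>1)"
      "X q' \<otimes> (?G \<otimes> ?G) \<preceq> X q' \<otimes> (G\<^sub>2 \<otimes> G\<^sub>2)"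
      by (simp_all add: mult_left_mono square_mono mult_le_left mult_le_right)
    then show ?thesis
      using that G\<^sub>1(2) G\<^sub>2(2) le_trans by blast
  qed
  ultimately show ?case by blast
qed

subsection \<open>Matrices\<close>

lemma isum_le:
  assumes "\<And>l. l < k \<Longrightarrow> f l \<preceq> X"
  shows "isum p z k f \<preceq> X"
proof -
  have "foldr (\<lambda>i acc. f i \<oplus> acc) xs z \<preceq> X" if "set xs \<subseteq> {..<k}" for xs
    using that assms by (induction xs) (auto simp: zero_le add_le)
  from this[of "[0..<k]"] show ?thesis
    unfolding isum_def by (simp add: atLeast0LessThan)
qed

lemma le_isum: "l < k \<Longrightarrow> f l \<preceq> isum p z k f"
proof -
  have "f l \<preceq> foldr (\<lambda>i acc. f i \<oplus> acc) xs z" if "l \<in> set xs" for xs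
    using that by (induction xs) (auto intro: le_trans le_add1 le_add2)
  then show "l < k \<Longrightarrow> ?thesis"
    unfolding isum_def by simp
qed

lemma isum_eqI:
  assumes "l\<^sub>0 < k" and "f l\<^sub>0 = X" and "\<And>l. l < k \<Longrightarrow> f l \<preceq> X"
  shows "isum p z k f = X"
proof (rule le_antisym)
  show "isum p z k f \<preceq> X"
    using assms(3) by (rule isum_le)
  show "X \<preceq> isum p z k f"
    using le_isum[OF assms(1), of f] assms(2) by simp
qed

context
  fixes n k :: nat and A B :: "nat \<Rightarrow> nat \<Rightarrow> 'a"
  assumes gram: "\<And>i j. i < n \<Longrightarrow> j < n \<Longrightarrow> A i j = isum p z k (\<lambda>l. B i l \<otimes> B j l)"
begin

lemma gram_sym: "i < n \<Longrightarrow> j < n \<Longrightarrow> A i j = A j i"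
  using gram by (simp add: mult.commute)

lemma gram_le_sq_root_diag:
  assumes "i < n" and "j < n"
  shows "A i j \<preceq> sq_root (A i i) \<otimes> sq_root (A j j)"
proof -
  have B: "B i l \<preceq> sq_root (A i i)" if "i < n" "l < k" for i l
  proof -
    have "B i l \<otimes> B i l \<preceq> A i i"
      using gram that le_isum[of l k "\<lambda>l. B i l \<otimes> B i l"] by simp
    then show ?thesis
      using square_le_imp_le[of "B i l" "sq_root (A i i)"] by (simp only: sq_root_square)
  qed
  have "isum p z k (\<lambda>l. B i l \<otimes> B j l) \<preceq> sq_root (A i i) \<otimes> sq_root (A j j)"
    by (rule isum_le) (simp add: assms B mult_mono)
  then show ?thesis
    using assms gram by simp
qed

end

lemma UL_completely_positive_of_columns:
  assumes sym: "\<And>i j. i < n \<Longrightarrow> j < n \<Longrightarrow> A i j = A j i"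
    and diag: "\<And>l. l < n \<Longrightarrow> d l \<otimes> d l = A l l"
    and quot: "\<And>i l. i < l \<Longrightarrow> l < n \<Longrightarrow> s i l \<otimes> d l = A i l"
    and stab: "\<And>l. l < n \<Longrightarrow> G l \<otimes> d l = d l"
    and below: "\<And>i j l. i < l \<Longrightarrow> j < l \<Longrightarrow> l < n \<Longrightarrow> (s i l \<otimes> s j l) \<otimes> (G l \<otimes> G l) \<preceq> A i j"
  shows "UL_completely_positive p m z n A"
proof -
  define U where "U i l = (if l < i then z else if l = i then d l else s i l \<otimes> G l)" for i l
  have diag_term: "U i j \<otimes> U j j = A i j" if "i \<le> j" "j < n" for i j
  proof (cases "i = j")
    case True
    then show ?thesis
      using diag that by (simp add: U_def)
  next
    case False
    then have "U i j \<otimes> U j j = s i j \<otimes> (G j \<otimes> d j)"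
      using that by (simp add: U_def mult.assoc)
    then show ?thesis
      using False that stab quot by simp
  qed
  have upper: "isum p z n (\<lambda>l. U i l \<otimes> U j l) = A i j" if "i \<le> j" "j < n" for i j
  proof (rule isum_eqI)
    show "j < n" "U i j \<otimes> U j j = A i j"
      using that by (simp_all add: diag_term)
  next
    fix l assume "l < n"
    consider "l < j" | "l = j" | "j < l" by arith
    then show "U i l \<otimes> U j l \<preceq> A i j"
    proof cases
      case 1
      then show ?thesis
        by (simp add: U_def mult_zero zero_le)
    next
      case 2
      then show ?thesis
        using diag_term[OF that] le_refl by simp
    next
      case 3
      then have "U i l \<otimes> U j l = (s i l \<otimes> s j l) \<otimes> (G l \<otimes> G l)"
        using that by (simp add: U_def mult_ac)
      then show ?thesis
        using below 3 that \<open>l < n\<close> by simp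
    qed
  qed
  show ?thesis
    unfolding UL_completely_positive_def
  proof (intro exI[of _ U] conjI allI impI)
    fix i j assume "i < n" "j < n" "j < i"
    then show "U i j = z"
      by (simp add: U_def)
  next
    fix i j assume ij: "i < n" "j < n"
    show "A i j = isum p z n (\<lambda>l. U i l \<otimes> U j l)"
    proof (cases "i \<le> j")
      case True
      then show ?thesis
        using upper ij by simp
    next
      case False
      then have "isum p z n (\<lambda>l. U j l \<otimes> U i l) = A j i"
        using upper ij by simp
      then show ?thesis
        using sym ij by (simp add: mult.commute)
    qed
  qed
qed

lemma UL_completely_positive_if_lap2_condition:
  assumes sym: "\<And>i j. i < n \<Longrightarrow> j < n \<Longrightarrow> A i j = A j i"
    and cs: "\<And>i j. i < n \<Longrightarrow> j < n \<Longrightarrow> A i j \<preceq> sq_root (A i i) \<otimes> sq_root (A j j)"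
    and lap: "lap2_condition p m n A"
  shows "UL_completely_positive p m z n A"
proof -
  define d where "d l = sq_root (A l l)" for l
  have diag: "d l \<otimes> d l = A l l" for l
    by (simp add: d_def sq_root_square)
  have "\<exists>t. t \<otimes> d l = A i l" if "i < n" "l < n" for i l
  proof -
    have "A i l \<preceq> d l"
      using cs[OF that] mult_le_right le_trans unfolding d_def by blast
    then show ?thesis
      using le_imp_factor mult.commute by metis
  qed
  then obtain s where quot: "\<And>i l. i < n \<Longrightarrow> l < n \<Longrightarrow> s i l \<otimes> d l = A i l"
    by metis
  have minor: "(s i l \<otimes> s j l) \<otimes> (d l \<otimes> d l) \<preceq> A i j \<otimes> (d l \<otimes> d l)"
    if "i < l" "j < l" "l < n" for i j l
  proof -
    have "(s i l \<otimes> s j l) \<otimes> (d l \<otimes> d l) = (s i l \<otimes> d l) \<otimes> (s j l \<otimes> d l)"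
      by (simp only: mult_ac)
    also have "\<dots> = A i l \<otimes> A j l"
      using quot that by simp
    also have "\<dots> \<preceq> A i j \<otimes> A l l"
    proof (cases "i = j")
      case True
      have "A i l \<otimes> A i l \<preceq> (d i \<otimes> d l) \<otimes> (d i \<otimes> d l)"
        using cs that unfolding d_def by (simp add: square_mono)
      also have "\<dots> = (d i \<otimes> d i) \<otimes> (d l \<otimes> d l)"
        by (simp only: mult_ac)
      finally show ?thesis
        using True diag by simp
    next
      case False
      then have "A i l \<otimes> A l j \<preceq> A i j \<otimes> A l l"
        using lap that unfolding lap2_condition_def by blast
      then show ?thesis
        using sym that by simp
    qed
    finally show ?thesis
      using diag by simp
  qed
  have "\<exists>g. g \<otimes> d l = d l \<and> (\<forall>q\<in>{..<l} \<times> {..<l}.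
      (s (fst q) l \<otimes> s (snd q) l) \<otimes> (g \<otimes> g) \<preceq> A (fst q) (snd q))" if "l < n" for l
    using that by (intro common_square_stabilizer) (auto intro: minor)
  then obtain G where "\<And>l. l < n \<Longrightarrow> G l \<otimes> d l = d l \<and> (\<forall>q\<in>{..<l} \<times> {..<l}.
      (s (fst q) l \<otimes> s (snd q) l) \<otimes> (G l \<otimes> G l) \<preceq> A (fst q) (snd q))"
    by metis
  then show ?thesis
    using sym diag quot by (intro UL_completely_positive_of_columns[of n A d s G]) auto
qed

end

theorem mainTheorem7:
  fixes p m :: "'a \<Rightarrow> 'a \<Rightarrow> 'a" and z e :: 'a
    and n :: nat and A :: "nat \<Rightarrow> nat \<Rightarrow> 'a"
  assumes "normal_incline p m z e"
    and "n \<ge> 3"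
    and "completely_positive p m z n A"
    and "lap2_condition p m n A"
  shows "UL_completely_positive p m z n A"
proof -
  interpret normal_incline_ops p m z e
    by (rule normal_incline_ops.intro) fact
  from assms(3) obtain k B
    where gram: "\<And>i j. i < n \<Longrightarrow> j < n \<Longrightarrow> A i j = isum p z k (\<lambda>l. m (B i l) (B j l))"
    unfolding completely_positive_def by blast
  show ?thesis
    using gram_sym[OF gram] gram_le_sq_root_diag[OF gram] assms(4)
    by (rule UL_completely_positive_if_lap2_condition)
qed

end
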